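(* Let $b,c\in Z^{10}$ with $\sum_i b_i=\sum_i c_i=0$. Let $j\in\{1,3,5,7,9\}$ and let $i_1,i_2,i_3,i_4$ be the remaining four odd indices listed in cyclic order (with $i_5:=i_1$). Assume $t\mid B_j$, $t\mid C_j$, $t\nmid B_{i_l}$, $t\nmid C_{i_l}$ for $l=1,\dots,4$, and $t\nmid B_{i_l}+B_{i_{l+1}}$, $t\nmid C_{i_l}+C_{i_{l+1}}$ for $l=1,2,3,4$. Then $\mathbb{M}(b)\cong\mathbb{M}(c)$ as $B_{5,10}$-modules if and only if $$t\mid B_{i_1}C_{i_2}B_{i_3}C_{i_4}-C_{i_1}B_{i_2}C_{i_3}B_{i_4}.$$
   Context: Let $Z=\mathbb{C}[[t]]$. Let $\Gamma_{10}$ be the quiver with vertices $0,1,\dots,9$ (indices taken mod $10$) on a cycle and arrows $x_i\colon i-1\to i$, $y_i\colon i\to i-1$ for $i=1,\dots,10$. Let $B_{5,10}$ be the completed path algebra of $\Gamma_{10}$ modulo the closed ideal generated by $xy=yx$ and $x^5=y^5$ at every vertex. For $b=(b_1,\dots,b_{10})\in Z^{10}$ with $\sum_i b_i=0$, the $B_{5,10}$-module $\mathbb{M}(b)$ has $V_i=Z\oplus Z$ at every vertex, and for odd $j$: $x_j=\begin{pmatrix} t& b_j\\ 0&1\end{pmatrix}$, $y_j=\begin{pmatrix} 1&-b_j\\0&t\end{pmatrix}$; for even $j$: $x_j=\begin{pmatrix}1&b_j\\0&t\end{pmatrix}$, $y_j=\begin{pmatrix}t&-b_j\\0&1\end{pmatrix}$.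 An isomorphism $\mathbb{M}(b)\to\mathbb{M}(c)$ is a family of invertible $Z$-linear maps $\varphi_i\colon Z^2\to Z^2$ commuting with all $x_i$ and $y_i$. For odd $i$ write $B_i=b_i+b_{i+1}$ and $C_i=c_i+c_{i+1}$ (indices mod $10$). *)

theory Defs
  imports "HOL-Analysis.Analysis" "HOL-Computational_Algebra.Formal_Power_Series"
begin

text \<open>Z = C[[t]] is complex fps; t is fps_X. Z-linear endomorphisms of Z^2 are
  2x2 matrices (rows indexed by the first index), acting on column vectors.\<close>

type_synonym zmat = "complex fps ^ 2 ^ 2"

definition mat2 :: "complex fps \<Rightarrow> complex fps \<Rightarrow> complex fps \<Rightarrow> complex fps \<Rightarrow> zmat" where
  "mat2 a b c d = vector [vector [a, b], vector [c, d]]"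

text \<open>Arrow x_j : vertex (j-1) -> vertex (j mod 10), for j = 1..10.\<close>
definition xmat :: "(nat \<Rightarrow> complex fps) \<Rightarrow> nat \<Rightarrow> zmat" where
  "xmat b j = (if odd j then mat2 fps_X (b j) 0 1 else mat2 1 (b j) 0 fps_X)"

text \<open>Arrow y_j : vertex (j mod 10) -> vertex (j-1), for j = 1..10.\<close>
definition ymat :: "(nat \<Rightarrow> complex fps) \<Rightarrow> nat \<Rightarrow> zmat" where
  "ymat b j = (if odd j then mat2 1 (- b j) 0 fps_X else mat2 fps_X (- b j) 0 1)"

definition M_iso :: "(nat \<Rightarrow> complex fps) \<Rightarrow> (nat \<Rightarrow> complex fps) \<Rightarrow> bool" where
  "M_iso b c \<longleftrightarrow> (\<exists>\<phi> :: nat \<Rightarrow> zmat.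
      (\<forall>i<10. invertible (\<phi> i)) \<and>
      (\<forall>j\<in>{1..10}. \<phi> (j mod 10) ** xmat b j = xmat c j ** \<phi> (j - 1) \<and>
                    \<phi> (j - 1) ** ymat b j = ymat c j ** \<phi> (j mod 10)))"

definition Bsum :: "(nat \<Rightarrow> complex fps) \<Rightarrow> nat \<Rightarrow> complex fps" where
  "Bsum b i = b i + b (i + 1)"

text \<open>i_l for l \<ge> 1: the remaining odd indices after j in cyclic order, periodic in l with
  period 4, so that i_5 = i_1.\<close>
definition oidx :: "nat \<Rightarrow> nat \<Rightarrow> nat" where
  "oidx j l = ((j - 1 + 2 * ((l - 1) mod 4 + 1)) mod 10) + 1"

end

theory Submission
  imports Defs
begin

text \<open>Propagating an isomorphism \<open>\<phi>\<close> along the arrows \<open>x\<^sub>1, ..., x\<^sub>n\<close> shows that the constant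
  terms \<open>u\<^sub>k, v\<^sub>k\<close> of the partial sums \<open>b\<^sub>1 + ... + b\<^sub>2\<^sub>k\<close> and \<open>c\<^sub>1 + ... + c\<^sub>2\<^sub>k\<close> are related by
  one Moebius transformation fixing 0, \<open>v\<^sub>k = p u\<^sub>k / (s - r u\<^sub>k)\<close> with \<open>p s \<noteq> 0\<close>, read off from
  \<open>\<phi>\<^sub>0\<close>; conversely such \<open>p, r, s\<close> give explicit intertwiners. The points \<open>u\<^sub>0 = 0, u\<^sub>1, ..., u\<^sub>4\<close>
  form a cycle with consecutive differences \<open>B\<^sub>1, B\<^sub>3, ..., B\<^sub>9\<close> at \<open>t = 0\<close>. As \<open>t\<close> divides \<open>B\<^sub>j\<close>,
  two of them coincide and the hypotheses make the remaining four distinct, with consecutive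
  differences \<open>B\<^sub>i\<^sub>1, ..., B\<^sub>i\<^sub>4\<close>. A Moebius transformation with prescribed values at four distinct
  points exists iff their cross ratio is preserved, which is the stated divisibility.\<close>

section \<open>Two by two matrices over \<open>\<complex>[[t]]\<close>\<close>

lemma mat2_nth [simp]:
  "mat2 a b c d $ 1 $ 1 = a" "mat2 a b c d $ 1 $ 2 = b"
  "mat2 a b c d $ 2 $ 1 = c" "mat2 a b c d $ 2 $ 2 = d"
  by (simp_all add: mat2_def)

lemma mat2_eq_iff: "mat2 a b c d = mat2 a' b' c' d' \<longleftrightarrow> a = a' \<and> b = b' \<and> c = c' \<and> d = d'"
  by (auto simp: mat2_def vec_eq_iff forall_2)

lemma mat2_entries: "(A :: zmat) = mat2 (A$1$1) (A$1$2) (A$2$1) (A$2$2)"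
  by (simp add: vec_eq_iff forall_2)

lemma mat2_mult:
  "mat2 a b c d ** mat2 a' b' c' d' = mat2 (a*a' + b*c') (a*b' + b*d') (c*a' + d*c') (c*b' + d*d')"
  by (simp add: vec_eq_iff forall_2 matrix_matrix_mult_def sum_2)

lemma mat_eq_mat2: "(mat x :: zmat) = mat2 x 0 0 x"
  by (simp add: vec_eq_iff forall_2 mat_def)

lemma det_mat2: "det (mat2 a b c d) = a*d - b*c"
  by (simp add: det_2)

lemma invertible_mat2_iff: "invertible (mat2 a b c d) \<longleftrightarrow> fps_nth (a*d - b*c) 0 \<noteq> 0"
proof
  assume "invertible (mat2 a b c d)"
  then obtain B where "mat2 a b c d ** B = mat 1"
    unfolding invertible_def by blast
  then have "(a*d - b*c) * det B = 1"
    by (metis det_mul det_I det_mat2)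
  then show "fps_nth (a*d - b*c) 0 \<noteq> 0"
    by (metis fps_mult_nth_0 fps_one_nth mult_zero_left zero_neq_one)
next
  assume "fps_nth (a*d - b*c) 0 \<noteq> 0"
  define i where "i = inverse (a*d - b*c)"
  have e: "(a*d - b*c) * i = 1"
    unfolding i_def using \<open>fps_nth (a*d - b*c) 0 \<noteq> 0\<close> by (rule inverse_mult_eq_1')
  have "mat2 a b c d ** mat2 (d*i) (-b*i) (-c*i) (a*i) = mat2 ((a*d - b*c) * i) 0 0 ((a*d - b*c) * i)"
       "mat2 (d*i) (-b*i) (-c*i) (a*i) ** mat2 a b c d = mat2 ((a*d - b*c) * i) 0 0 ((a*d - b*c) * i)"
    by (simp_all add: mat2_mult algebra_simps)
  then show "invertible (mat2 a b c d)"
    unfolding invertible_def e mat_eq_mat2[of 1] by blast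
qed

lemma fps_X_dvd_iff: "fps_X dvd (f :: 'a::comm_ring_1 fps) \<longleftrightarrow> fps_nth f 0 = 0"
proof
  assume "fps_X dvd f"
  then show "fps_nth f 0 = 0" by auto
next
  assume "fps_nth f 0 = 0"
  then have "f = fps_X * fps_shift 1 f"
    by (intro fps_ext) auto
  then show "fps_X dvd f" by (metis dvd_triv_left)
qed

section \<open>Moebius transformations fixing zero\<close>

text \<open>\<open>v\<close> is the image of \<open>u\<close> under \<open>w \<mapsto> p w / (s - r w)\<close>, with the denominator cleared.\<close>

definition moebius_maps :: "'a::comm_ring \<Rightarrow> 'a \<Rightarrow> 'a \<Rightarrow> 'a \<Rightarrow> 'a \<Rightarrow> bool" where
  "moebius_maps p r s u v \<longleftrightarrow> v * (s - r * u) = p * u"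

lemma moebius_maps_0 [simp]: "moebius_maps p r s 0 0"
  by (simp add: moebius_maps_def)

lemma moebius_maps_denominator_nonzero:
  fixes p r s u v :: "'a::idom"
  assumes "p * s \<noteq> 0" and "moebius_maps p r s u v"
  shows "s - r * u \<noteq> 0"
proof
  assume "s - r * u = 0"
  with assms have "u = 0"
    by (simp add: moebius_maps_def)
  with \<open>s - r * u = 0\<close> assms(1) show False
    by simp
qed

lemma moebius_maps_diff:
  fixes p r s :: "'a::comm_ring"
  assumes "moebius_maps p r s u v" and "moebius_maps p r s u' v'"
  shows "(v' - v) * (s - r * u) * (s - r * u') = p * s * (u' - u)"
proof -
  have "(v' - v) * (s - r * u) * (s - r * u')
      = (v' * (s - r * u')) * (s - r * u) - (v * (s - r * u)) * (s - r * u')"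
    by (simp add: algebra_simps)
  also have "\<dots> = p * s * (u' - u)"
    using assms by (simp add: moebius_maps_def algebra_simps)
  finally show ?thesis .
qed

lemma moebius_maps_cross_ratio:
  fixes p r s x y z x' y' z' :: "'a::idom"
  assumes ps: "p * s \<noteq> 0"
    and x: "moebius_maps p r s x x'" and y: "moebius_maps p r s y y'" and z: "moebius_maps p r s z z'"
  shows "x * (y' - x') * (z - y) * z' = x' * (y - x) * (z' - y') * z"
proof -
  let ?D = "\<lambda>w. s - r * w"
  have Fx: "x' * s * ?D x = p * s * x"
    using moebius_maps_diff[OF moebius_maps_0 x] by simp
  have Fz: "z' * s * ?D z = p * s * z"
    using moebius_maps_diff[OF moebius_maps_0 z] by simp
  have Fxy: "(y' - x') * ?D x * ?D y = p * s * (y - x)"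
    using moebius_maps_diff[OF x y] .
  have Fyz: "(z' - y') * ?D y * ?D z = p * s * (z - y)"
    using moebius_maps_diff[OF y z] .
  have "(x * (y' - x') * (z - y) * z' - x' * (y - x) * (z' - y') * z) * (s * ?D x * ?D y * ?D z)
      = x * (z - y) * ((y' - x') * ?D x * ?D y) * (z' * s * ?D z)
        - (y - x) * z * (x' * s * ?D x) * ((z' - y') * ?D y * ?D z)"
    by (simp add: algebra_simps)
  also have "\<dots> = 0"
    unfolding Fx Fz Fxy Fyz by (simp add: algebra_simps)
  finally show ?thesis
    using ps moebius_maps_denominator_nonzero[OF ps] x y z by simp
qed

lemma moebius_maps_cross_ratio_iff:
  fixes d1 d2 d3 d4 e1 e2 e3 e4 :: "'a::idom"
  assumes "d1 + d2 + d3 + d4 = 0" and "e1 + e2 + e3 + e4 = 0"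
    and "d1 \<noteq> 0" "d2 \<noteq> 0" "d1 + d2 \<noteq> 0" "e1 \<noteq> 0" "e2 \<noteq> 0" "e1 + e2 \<noteq> 0"
  shows "(\<exists>p r s. p * s \<noteq> 0 \<and> moebius_maps p r s d1 e1 \<and> moebius_maps p r s (d1 + d2) (e1 + e2)
            \<and> moebius_maps p r s (d1 + d2 + d3) (e1 + e2 + e3))
         \<longleftrightarrow> d1 * e2 * d3 * e4 = e1 * d2 * e3 * d4"
proof -
  have d4: "d4 = - (d1 + d2 + d3)" and e4: "e4 = - (e1 + e2 + e3)"
    using assms(1,2) by (simp_all add: eq_neg_iff_add_eq_0 algebra_simps)
  have cross_ratio: "d1 * e2 * d3 * e4 = e1 * d2 * e3 * d4 \<longleftrightarrow>
    d1 * ((e1 + e2) - e1) * ((d1 + d2 + d3) - (d1 + d2)) * (e1 + e2 + e3)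
    = e1 * ((d1 + d2) - d1) * ((e1 + e2 + e3) - (e1 + e2)) * (d1 + d2 + d3)"
    unfolding d4 e4 by (simp add: algebra_simps) auto
  show ?thesis
  proof
    assume "\<exists>p r s. p * s \<noteq> 0 \<and> moebius_maps p r s d1 e1 \<and> moebius_maps p r s (d1 + d2) (e1 + e2)
              \<and> moebius_maps p r s (d1 + d2 + d3) (e1 + e2 + e3)"
    then obtain p r s where "p * s \<noteq> 0" "moebius_maps p r s d1 e1"
      "moebius_maps p r s (d1 + d2) (e1 + e2)" "moebius_maps p r s (d1 + d2 + d3) (e1 + e2 + e3)"
      by blast
    then show "d1 * e2 * d3 * e4 = e1 * d2 * e3 * d4"
      unfolding cross_ratio by (rule moebius_maps_cross_ratio)
  next
    assume "d1 * e2 * d3 * e4 = e1 * d2 * e3 * d4"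
    \<comment> \<open>the Moebius transformation fixing 0 with \<open>d1 \<mapsto> e1\<close> and \<open>d1 + d2 \<mapsto> e1 + e2\<close>\<close>
    define p r s where "p = e1 * (e1 + e2) * d2" and "r = (e1 + e2) * d1 - e1 * (d1 + d2)"
      and "s = e2 * d1 * (d1 + d2)"
    have "p * s \<noteq> 0"
      using assms by (simp add: p_def s_def)
    moreover have "moebius_maps p r s d1 e1" "moebius_maps p r s (d1 + d2) (e1 + e2)"
      by (simp_all add: moebius_maps_def p_def r_def s_def algebra_simps)
    moreover have "moebius_maps p r s (d1 + d2 + d3) (e1 + e2 + e3)"
      using \<open>d1 * e2 * d3 * e4 = e1 * d2 * e3 * d4\<close>
      by (simp add: moebius_maps_def p_def r_def s_def d4 e4 algebra_simps)
    ultimately show "\<exists>p r s. p * s \<noteq> 0 \<and> moebius_maps p r s d1 e1 \<and> moebius_maps p r s (d1 + d2) (e1 + e2)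
              \<and> moebius_maps p r s (d1 + d2 + d3) (e1 + e2 + e3)"
      by blast
  qed
qed

lemma oidx_odd_cases:
  assumes "j \<in> {1, 3, 5, 7, 9}"
  obtains
    (j1) "j = 1" "oidx j 1 = 3" "oidx j 2 = 5" "oidx j 3 = 7" "oidx j 4 = 9" "oidx j 5 = 3"
  | (j3) "j = 3" "oidx j 1 = 5" "oidx j 2 = 7" "oidx j 3 = 9" "oidx j 4 = 1" "oidx j 5 = 5"
  | (j5) "j = 5" "oidx j 1 = 7" "oidx j 2 = 9" "oidx j 3 = 1" "oidx j 4 = 3" "oidx j 5 = 7"
  | (j7) "j = 7" "oidx j 1 = 9" "oidx j 2 = 1" "oidx j 3 = 3" "oidx j 4 = 5" "oidx j 5 = 9"
  | (j9) "j = 9" "oidx j 1 = 1" "oidx j 2 = 3" "oidx j 3 = 5" "oidx j 4 = 7" "oidx j 5 = 1"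
  using assms by (auto simp: oidx_def)

lemma cyclic_cross_ratio_criterion:
  fixes a e :: "nat \<Rightarrow> 'a::idom" and j :: nat
  assumes "a 1 + a 3 + a 5 + a 7 + a 9 = 0" and "e 1 + e 3 + e 5 + e 7 + e 9 = 0"
    and "j \<in> {1, 3, 5, 7, 9}" and "a j = 0" and "e j = 0"
    and "\<forall>l\<in>{1..4}. a (oidx j l) \<noteq> 0 \<and> e (oidx j l) \<noteq> 0"
    and "\<forall>l\<in>{1..4}. a (oidx j l) + a (oidx j (l + 1)) \<noteq> 0 \<and> e (oidx j l) + e (oidx j (l + 1)) \<noteq> 0"
  shows "(\<exists>p r s. p * s \<noteq> 0 \<and> moebius_maps p r s (a 1) (e 1)
            \<and> moebius_maps p r s (a 1 + a 3) (e 1 + e 3)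
            \<and> moebius_maps p r s (a 1 + a 3 + a 5) (e 1 + e 3 + e 5)
            \<and> moebius_maps p r s (a 1 + a 3 + a 5 + a 7) (e 1 + e 3 + e 5 + e 7))
    \<longleftrightarrow> a (oidx j 1) * e (oidx j 2) * a (oidx j 3) * e (oidx j 4)
        = e (oidx j 1) * a (oidx j 2) * e (oidx j 3) * a (oidx j 4)"
proof -
  have ball: "(\<forall>l\<in>{1..4}. P l) \<longleftrightarrow> P 1 \<and> P 2 \<and> P 3 \<and> P 4" for P :: "nat \<Rightarrow> bool"
    by (simp add: atLeastAtMost_insertL[symmetric] numeral_eq_Suc)
  \<comment> \<open>Evaluated by hand: the simplifier would rewrite \<open>1 + 1\<close> to \<open>Suc 1\<close>, and then the values of
    \<open>oidx\<close> from \<open>oidx_odd_cases\<close> no longer match.\<close>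
  have succ: "(1::nat) + 1 = 2" "(2::nat) + 1 = 3" "(3::nat) + 1 = 4" "(4::nat) + 1 = 5"
    by simp_all
  note nondeg = assms(6,7)[unfolded ball succ]
  \<comment> \<open>As \<open>a j = 0\<close>, two consecutive partial sums coincide (for \<open>j = 9\<close> the last one is 0), leaving
    the points \<open>0, d\<^sub>1, d\<^sub>1 + d\<^sub>2, d\<^sub>1 + d\<^sub>2 + d\<^sub>3\<close> of the criterion.\<close>
  from assms(3) show ?thesis
  proof (cases rule: oidx_odd_cases)
    case j1
    note o = j1(2-6)
    have "a 1 = 0" "e 1 = 0"
      using assms(4,5) unfolding j1(1) .
    with assms(1,2) nondeg[unfolded o] show ?thesis
      using moebius_maps_cross_ratio_iff[of "a 3" "a 5" "a 7" "a 9" "e 3" "e 5" "e 7" "e 9"]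
      unfolding o by (simp add: ac_simps)
  next
    case j3
    note o = j3(2-6)
    have "a 3 = 0" "e 3 = 0"
      using assms(4,5) unfolding j3(1) .
    with assms(1,2) nondeg[unfolded o] show ?thesis
      using moebius_maps_cross_ratio_iff[of "a 1" "a 5" "a 7" "a 9" "e 1" "e 5" "e 7" "e 9"]
      unfolding o by (simp add: ac_simps) (rule eq_commute)
  next
    case j5
    note o = j5(2-6)
    have "a 5 = 0" "e 5 = 0"
      using assms(4,5) unfolding j5(1) .
    with assms(1,2) nondeg[unfolded o] show ?thesis
      using moebius_maps_cross_ratio_iff[of "a 1" "a 3" "a 7" "a 9" "e 1" "e 3" "e 7" "e 9"]
      unfolding o by (simp add: ac_simps)
  next
    case j7
    note o = j7(2-6)
    have "a 7 = 0" "e 7 = 0"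
      using assms(4,5) unfolding j7(1) .
    with assms(1,2) nondeg[unfolded o] show ?thesis
      using moebius_maps_cross_ratio_iff[of "a 1" "a 3" "a 5" "a 9" "e 1" "e 3" "e 5" "e 9"]
      unfolding o by (simp add: ac_simps) (rule eq_commute)
  next
    case j9
    note o = j9(2-6)
    have "a 9 = 0" "e 9 = 0"
      using assms(4,5) unfolding j9(1) .
    with assms(1,2) nondeg[unfolded o] show ?thesis
      using moebius_maps_cross_ratio_iff[of "a 1" "a 3" "a 5" "a 7" "e 1" "e 3" "e 5" "e 7"]
      unfolding o by (simp add: ac_simps)
  qed
qed

section \<open>Constructing isomorphisms\<close>

definition psum :: "(nat \<Rightarrow> 'a::comm_monoid_add) \<Rightarrow> nat \<Rightarrow> 'a" where
  "psum b n = (\<Sum>i\<in>{1..n}. b i)"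

lemma psum_0 [simp]: "psum b 0 = 0"
  by (simp add: psum_def)

lemma psum_Suc: "psum b (Suc n) = psum b n + b (Suc n)"
  by (simp add: psum_def)

text \<open>The intertwiner at vertex \<open>n\<close>, where \<open>u, v\<close> are the \<open>n\<close>-th partial sums of \<open>b, c\<close>. The entry
  \<open>Q = v S - u (P + v R)\<close> makes the determinant equal to \<open>P S\<close>; at even vertices the off-diagonal
  entries are rescaled by \<open>t\<close>, which requires \<open>t\<close> to divide \<open>Q\<close>: this is the Moebius condition.\<close>

definition iso_mat_odd :: "complex fps \<Rightarrow> complex fps \<Rightarrow> complex fps \<Rightarrow> complex fps \<Rightarrow> complex fps \<Rightarrow> zmat" where
  "iso_mat_odd P R S u v = mat2 (P + v * R) (v * S - u * (P + v * R)) R (S - R * u)"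

definition iso_mat_even :: "complex fps \<Rightarrow> complex fps \<Rightarrow> complex fps \<Rightarrow> complex fps \<Rightarrow> complex fps \<Rightarrow> zmat" where
  "iso_mat_even P R S u v = mat2 (P + v * R) (fps_shift 1 (v * S - u * (P + v * R))) (fps_X * R) (S - R * u)"

lemma iso_mat_even_eq:
  assumes "fps_X * E = v * S - u * (P + v * R)"
  shows "iso_mat_even P R S u v = mat2 (P + v * R) E (fps_X * R) (S - R * u)"
proof -
  have "fps_shift 1 (fps_X * E) = E"
    by (metis fps_shift_times_fps_X' mult.commute)
  then show ?thesis
    unfolding assms by (simp add: iso_mat_even_def)
qed

lemma iso_mat_step_odd:
  assumes "fps_X dvd (v * S - u * (P + v * R))"
  shows "iso_mat_odd P R S (u + \<beta>) (v + \<gamma>) ** mat2 fps_X \<beta> 0 1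
           = mat2 fps_X \<gamma> 0 1 ** iso_mat_even P R S u v"
    and "iso_mat_even P R S u v ** mat2 1 (-\<beta>) 0 fps_X
           = mat2 1 (-\<gamma>) 0 fps_X ** iso_mat_odd P R S (u + \<beta>) (v + \<gamma>)"
proof -
  obtain E where E: "fps_X * E = v * S - u * (P + v * R)"
    using assms by (metis dvd_def)
  have E': "E * fps_X = v * S - u * (P + v * R)"
    using E by (simp add: mult.commute)
  show "iso_mat_odd P R S (u + \<beta>) (v + \<gamma>) ** mat2 fps_X \<beta> 0 1
           = mat2 fps_X \<gamma> 0 1 ** iso_mat_even P R S u v"
       "iso_mat_even P R S u v ** mat2 1 (-\<beta>) 0 fps_X
           = mat2 1 (-\<gamma>) 0 fps_X ** iso_mat_odd P R S (u + \<beta>) (v + \<gamma>)"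
    unfolding iso_mat_even_eq[OF E] iso_mat_odd_def mat2_mult mat2_eq_iff E E'
    by (simp_all add: algebra_simps)
qed

lemma iso_mat_step_even:
  assumes "fps_X dvd ((v + \<gamma>) * S - (u + \<beta>) * (P + (v + \<gamma>) * R))"
  shows "iso_mat_even P R S (u + \<beta>) (v + \<gamma>) ** mat2 1 \<beta> 0 fps_X
           = mat2 1 \<gamma> 0 fps_X ** iso_mat_odd P R S u v"
    and "iso_mat_odd P R S u v ** mat2 fps_X (-\<beta>) 0 1
           = mat2 fps_X (-\<gamma>) 0 1 ** iso_mat_even P R S (u + \<beta>) (v + \<gamma>)"
proof -
  obtain E where E: "fps_X * E = (v + \<gamma>) * S - (u + \<beta>) * (P + (v + \<gamma>) * R)"
    using assms by (metis dvd_def)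
  have E': "E * fps_X = (v + \<gamma>) * S - (u + \<beta>) * (P + (v + \<gamma>) * R)"
    using E by (simp add: mult.commute)
  show "iso_mat_even P R S (u + \<beta>) (v + \<gamma>) ** mat2 1 \<beta> 0 fps_X
           = mat2 1 \<gamma> 0 fps_X ** iso_mat_odd P R S u v"
       "iso_mat_odd P R S u v ** mat2 fps_X (-\<beta>) 0 1
           = mat2 fps_X (-\<gamma>) 0 1 ** iso_mat_even P R S (u + \<beta>) (v + \<gamma>)"
    unfolding iso_mat_even_eq[OF E] iso_mat_odd_def mat2_mult mat2_eq_iff E E'
    by (simp_all add: algebra_simps)
qed

lemma invertible_iso_mat_odd:
  assumes "fps_nth (P * S) 0 \<noteq> 0"
  shows "invertible (iso_mat_odd P R S u v)"
proof -
  have "(P + v * R) * (S - R * u) - (v * S - u * (P + v * R)) * R = P * S"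
    by (simp add: algebra_simps)
  then show ?thesis
    using assms by (simp add: iso_mat_odd_def invertible_mat2_iff)
qed

lemma invertible_iso_mat_even:
  assumes "fps_nth (P * S) 0 \<noteq> 0" and "fps_X dvd (v * S - u * (P + v * R))"
  shows "invertible (iso_mat_even P R S u v)"
proof -
  obtain E where E: "fps_X * E = v * S - u * (P + v * R)"
    using assms(2) by (metis dvd_def)
  have "E * (fps_X * R) = (v * S - u * (P + v * R)) * R"
    by (simp flip: E)
  then have "(P + v * R) * (S - R * u) - E * (fps_X * R) = P * S"
    by (simp add: algebra_simps)
  then show ?thesis
    using assms(1) by (simp add: iso_mat_even_eq[OF E] invertible_mat2_iff)
qed

lemma fps_X_dvd_at_even_vertex:
  fixes b c :: "nat \<Rightarrow> complex fps"
  assumes "psum b 10 = 0" and "psum c 10 = 0"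
    and moeb: "\<forall>k\<in>{1..4}. moebius_maps p r s (fps_nth (psum b (2 * k)) 0) (fps_nth (psum c (2 * k)) 0)"
    and "even n" and "n \<le> 10"
  shows "fps_X dvd (psum c n * fps_const s - psum b n * (fps_const p + psum c n * fps_const r))"
proof -
  obtain k where "n = 2 * k" "k \<le> 5"
    using assms(4,5) by (auto elim!: evenE)
  then consider (ends) "n = 0 \<or> n = 10" | (inner) "k \<in> {1..4}" "n = 2 * k"
    by force
  then show ?thesis
  proof cases
    case ends
    then show ?thesis
      using assms(1,2) by auto
  next
    case inner
    then show ?thesis
      using moeb by (auto simp: fps_X_dvd_iff moebius_maps_def algebra_simps)
  qed
qed

lemma moebius_imp_M_iso:
  fixes b c :: "nat \<Rightarrow> complex fps" and p r s :: complex
  assumes "psum b 10 = 0" and "psum c 10 = 0" and "p * s \<noteq> 0"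
    and moeb: "\<forall>k\<in>{1..4}. moebius_maps p r s (fps_nth (psum b (2 * k)) 0) (fps_nth (psum c (2 * k)) 0)"
  shows "M_iso b c"
proof -
  define P R S where "P = fps_const p" and "R = fps_const r" and "S = fps_const s"
  define \<phi> where "\<phi> n = (if odd n then iso_mat_odd else iso_mat_even) P R S (psum b n) (psum c n)" for n
  have PS: "fps_nth (P * S) 0 \<noteq> 0"
    using assms(3) by (simp add: P_def S_def)
  have dvd: "fps_X dvd (psum c n * S - psum b n * (P + psum c n * R))" if "even n" "n \<le> 10" for n
    using fps_X_dvd_at_even_vertex[OF assms(1,2) moeb that] by (simp add: P_def R_def S_def)
  have step: "\<phi> (Suc n) ** xmat b (Suc n) = xmat c (Suc n) ** \<phi> n \<and>
              \<phi> n ** ymat b (Suc n) = ymat c (Suc n) ** \<phi> (Suc n)" if "n < 10" for n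
  proof (cases "even n")
    case True
    then show ?thesis
      using iso_mat_step_odd[OF dvd[of n]] that
      by (simp add: \<phi>_def psum_Suc xmat_def ymat_def)
  next
    case False
    then show ?thesis
      using iso_mat_step_even[OF dvd[of "Suc n", unfolded psum_Suc]] that
      by (simp add: \<phi>_def psum_Suc xmat_def ymat_def)
  qed
  have "invertible (\<phi> i)" if "i < 10" for i
    using invertible_iso_mat_odd[OF PS] invertible_iso_mat_even[OF PS dvd] that
    by (simp add: \<phi>_def)
  moreover have "\<phi> (j mod 10) ** xmat b j = xmat c j ** \<phi> (j - 1) \<and>
                 \<phi> (j - 1) ** ymat b j = ymat c j ** \<phi> (j mod 10)" if j: "j \<in> {1..10}" for j
  proof -
    obtain n where n: "j = Suc n" "n < 10"
      using j by (cases j) auto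
    have "\<phi> 10 = \<phi> 0"
      using assms(1,2) by (simp add: \<phi>_def)
    then have "\<phi> (j mod 10) = \<phi> j"
      using n by (cases "j = 10") auto
    then show ?thesis
      using step n by simp
  qed
  ultimately show ?thesis
    unfolding M_iso_def by blast
qed

section \<open>Constraints on isomorphisms\<close>

text \<open>\<open>t\<^bsup>1 - \<lceil>n/2\<rceil>\<^esup> x\<^sub>n \<cdots> x\<^sub>1\<close>, which is integral.\<close>

definition xprod :: "(nat \<Rightarrow> complex fps) \<Rightarrow> nat \<Rightarrow> zmat" where
  "xprod b n = mat2 fps_X (psum b n) 0 (if odd n then 1 else fps_X)"

lemma mat_fps_X_commute: "mat fps_X ** (A :: zmat) = A ** mat fps_X"
  by (subst (1 2) mat2_entries[of A]) (simp add: mat_eq_mat2 mat2_mult mult.commute)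

lemma mult_mat_fps_X_cancel:
  assumes "A ** mat fps_X = (B :: zmat) ** mat fps_X"
  shows "A = B"
  using assms by (subst (asm) (1 2) mat2_entries) (auto simp: mat_eq_mat2 mat2_mult mat2_eq_iff vec_eq_iff forall_2)

lemma xmat_xprod_even: "even (Suc m) \<Longrightarrow> xmat b (Suc m) ** xprod b m = xprod b (Suc m)"
  by (simp add: xprod_def xmat_def mat2_mult psum_Suc algebra_simps)

lemma xmat_xprod_odd: "odd (Suc m) \<Longrightarrow> xmat b (Suc m) ** xprod b m = xprod b (Suc m) ** mat fps_X"
  by (simp add: xprod_def xmat_def mat_eq_mat2 mat2_mult psum_Suc algebra_simps)

lemma xprod_intertwine:
  fixes \<phi> :: "nat \<Rightarrow> zmat"
  assumes "\<And>j. j \<in> {1..n} \<Longrightarrow> \<phi> j ** xmat b j = xmat c j ** \<phi> (j - 1)"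
  shows "\<phi> n ** xprod b n = xprod c n ** \<phi> 0"
  using assms
proof (induction n)
  case 0
  have "xprod b 0 = mat fps_X" for b
    by (simp add: xprod_def mat_eq_mat2)
  then show ?case
    by (simp add: mat_fps_X_commute)
next
  case (Suc m)
  have IH: "\<phi> m ** xprod b m = xprod c m ** \<phi> 0"
    using Suc by auto
  have step: "\<phi> (Suc m) ** xmat b (Suc m) = xmat c (Suc m) ** \<phi> m"
    using Suc.prems[of "Suc m"] by simp
  show ?case
  proof (cases "even (Suc m)")
    case True
    have "\<phi> (Suc m) ** xprod b (Suc m) = xmat c (Suc m) ** (\<phi> m ** xprod b m)"
      by (simp flip: xmat_xprod_even[OF True] add: matrix_mul_assoc step)
    then show ?thesis
      by (simp add: IH flip: xmat_xprod_even[OF True] matrix_mul_assoc)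
  next
    case False
    then have xc: "xmat d (Suc m) ** xprod d m = xprod d (Suc m) ** mat fps_X" for d
      by (simp add: xmat_xprod_odd)
    have "(\<phi> (Suc m) ** xprod b (Suc m)) ** mat fps_X = \<phi> (Suc m) ** (xmat b (Suc m) ** xprod b m)"
      by (simp add: xc flip: matrix_mul_assoc)
    also have "\<dots> = xmat c (Suc m) ** (xprod c m ** \<phi> 0)"
      by (simp only: matrix_mul_assoc step) (simp only: IH flip: matrix_mul_assoc)
    also have "\<dots> = (xprod c (Suc m) ** mat fps_X) ** \<phi> 0"
      by (simp add: matrix_mul_assoc xc)
    also have "\<dots> = (xprod c (Suc m) ** \<phi> 0) ** mat fps_X"
      by (metis matrix_mul_assoc mat_fps_X_commute)
    finally show ?thesis
      by (rule mult_mat_fps_X_cancel)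
  qed
qed

lemma fps_X_dvd_lower_left:
  assumes "A ** xmat b 1 = xmat c 1 ** B"
  shows "fps_X dvd B $ 2 $ 1"
proof -
  have "A $ 2 $ 1 * fps_X = B $ 2 $ 1"
    using assms by (subst (asm) (1 2) mat2_entries) (simp add: xmat_def mat2_mult mat2_eq_iff)
  then show ?thesis
    by (metis dvd_triv_right)
qed

lemma even_intertwiner_moebius:
  assumes "even n" and "A ** xprod b n = xprod c n ** mat2 a q (fps_X * \<rho>) d"
  shows "moebius_maps (fps_nth a 0) (fps_nth \<rho> 0) (fps_nth d 0)
           (fps_nth (psum b n) 0) (fps_nth (psum c n) 0)"
proof -
  let ?u = "psum b n" and ?v = "psum c n"
  have "A $ 1 $ 1 * fps_X = fps_X * a + ?v * (fps_X * \<rho>)"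
    and top_right: "A $ 1 $ 1 * ?u + A $ 1 $ 2 * fps_X = fps_X * q + ?v * d"
    using assms by (subst (asm) mat2_entries[of A], simp add: xprod_def mat2_mult mat2_eq_iff)+
  then have "fps_X * A $ 1 $ 1 = fps_X * (a + ?v * \<rho>)"
    by (simp add: algebra_simps)
  then have "A $ 1 $ 1 = a + ?v * \<rho>"
    by simp
  then have "fps_nth ((a + ?v * \<rho>) * ?u) 0 = fps_nth (?v * d) 0"
    using arg_cong[OF top_right, of "\<lambda>f. fps_nth f 0"] by simp
  then show ?thesis
    by (simp add: moebius_maps_def algebra_simps)
qed

lemma M_iso_imp_moebius:
  assumes "M_iso b c"
  shows "\<exists>p r s. p * s \<noteq> 0 \<and>
    (\<forall>k\<in>{1..4}. moebius_maps p r s (fps_nth (psum b (2 * k)) 0) (fps_nth (psum c (2 * k)) 0))"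
proof -
  obtain \<phi> where inv: "\<forall>i<10. invertible (\<phi> i)"
    and intertwine: "\<forall>j\<in>{1..10}. \<phi> (j mod 10) ** xmat b j = xmat c j ** \<phi> (j - 1)"
    using assms unfolding M_iso_def by blast
  have chain: "\<phi> n ** xprod b n = xprod c n ** \<phi> 0" if "n \<le> 9" for n
  proof (rule xprod_intertwine)
    fix j assume "j \<in> {1..n}"
    with that have "j \<in> {1..10}" "j mod 10 = j"
      by auto
    with intertwine show "\<phi> j ** xmat b j = xmat c j ** \<phi> (j - 1)"
      by metis
  qed
  have "\<phi> 1 ** xmat b 1 = xmat c 1 ** \<phi> 0"
    using intertwine[rule_format, of 1] by simp
  then obtain \<rho> where \<rho>: "\<phi> 0 $ 2 $ 1 = fps_X * \<rho>"
    by (metis fps_X_dvd_lower_left dvdE)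
  define a q d where "a = \<phi> 0 $ 1 $ 1" and "q = \<phi> 0 $ 1 $ 2" and "d = \<phi> 0 $ 2 $ 2"
  have \<phi>0: "\<phi> 0 = mat2 a q (fps_X * \<rho>) d"
    unfolding a_def q_def d_def \<rho>[symmetric] by (rule mat2_entries)
  have "fps_nth a 0 * fps_nth d 0 \<noteq> 0"
    using inv \<phi>0 invertible_mat2_iff by fastforce
  moreover have "moebius_maps (fps_nth a 0) (fps_nth \<rho> 0) (fps_nth d 0)
                   (fps_nth (psum b (2 * k)) 0) (fps_nth (psum c (2 * k)) 0)" if "k \<in> {1..4}" for k
    using even_intertwiner_moebius[of "2 * k"] chain[of "2 * k"] that \<phi>0 by auto
  ultimately show ?thesis
    by blast
qed

section \<open>The isomorphism criterion\<close>

lemma psum_even_Bsum: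
  "psum b 2 = Bsum b 1"
  "psum b 4 = Bsum b 1 + Bsum b 3"
  "psum b 6 = Bsum b 1 + Bsum b 3 + Bsum b 5"
  "psum b 8 = Bsum b 1 + Bsum b 3 + Bsum b 5 + Bsum b 7"
  "psum b 10 = Bsum b 1 + Bsum b 3 + Bsum b 5 + Bsum b 7 + Bsum b 9"
  by (simp_all add: eval_nat_numeral psum_Suc Bsum_def algebra_simps)

lemma M_iso_iff_moebius:
  fixes b c :: "nat \<Rightarrow> complex fps"
  assumes "(\<Sum>i\<in>{1..10}. b i) = 0" and "(\<Sum>i\<in>{1..10}. c i) = 0"
  defines "a \<equiv> \<lambda>k. fps_nth (Bsum b k) 0" and "e \<equiv> \<lambda>k. fps_nth (Bsum c k) 0"
  shows "M_iso b c \<longleftrightarrow> (\<exists>p r s. p * s \<noteq> 0 \<and> moebius_maps p r s (a 1) (e 1)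
            \<and> moebius_maps p r s (a 1 + a 3) (e 1 + e 3)
            \<and> moebius_maps p r s (a 1 + a 3 + a 5) (e 1 + e 3 + e 5)
            \<and> moebius_maps p r s (a 1 + a 3 + a 5 + a 7) (e 1 + e 3 + e 5 + e 7))"
proof -
  have "{1..4::nat} = {1, 2, 3, 4}"
    by auto
  then have "(\<forall>k\<in>{1..4}. moebius_maps p r s (fps_nth (psum b (2 * k)) 0) (fps_nth (psum c (2 * k)) 0))
      \<longleftrightarrow> moebius_maps p r s (a 1) (e 1)
            \<and> moebius_maps p r s (a 1 + a 3) (e 1 + e 3)
            \<and> moebius_maps p r s (a 1 + a 3 + a 5) (e 1 + e 3 + e 5)
            \<and> moebius_maps p r s (a 1 + a 3 + a 5 + a 7) (e 1 + e 3 + e 5 + e 7)" for p r s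
    by (simp add: psum_even_Bsum a_def e_def)
  moreover have "psum b 10 = 0" "psum c 10 = 0"
    using assms(1,2) by (simp_all add: psum_def)
  ultimately show ?thesis
    using M_iso_imp_moebius moebius_imp_M_iso by metis
qed

theorem theorem2p5:
  fixes b c :: "nat \<Rightarrow> complex fps" and j :: nat
  assumes "(\<Sum>i\<in>{1..10}. b i) = 0" and "(\<Sum>i\<in>{1..10}. c i) = 0"
    and "j \<in> {1, 3, 5, 7, 9}"
    and "fps_X dvd Bsum b j" and "fps_X dvd Bsum c j"
    and "\<forall>l\<in>{1..4}. \<not> fps_X dvd Bsum b (oidx j l) \<and> \<not> fps_X dvd Bsum c (oidx j l)"
    and "\<forall>l\<in>{1..4}. \<not> fps_X dvd (Bsum b (oidx j l) + Bsum b (oidx j (l + 1))) \<and>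
                    \<not> fps_X dvd (Bsum c (oidx j l) + Bsum c (oidx j (l + 1)))"
  shows "M_iso b c \<longleftrightarrow>
    fps_X dvd (Bsum b (oidx j 1) * Bsum c (oidx j 2) * Bsum b (oidx j 3) * Bsum c (oidx j 4)
             - Bsum c (oidx j 1) * Bsum b (oidx j 2) * Bsum c (oidx j 3) * Bsum b (oidx j 4))"
proof -
  let ?a = "\<lambda>k. fps_nth (Bsum b k) 0" and ?e = "\<lambda>k. fps_nth (Bsum c k) 0"
  have "?a 1 + ?a 3 + ?a 5 + ?a 7 + ?a 9 = 0" "?e 1 + ?e 3 + ?e 5 + ?e 7 + ?e 9 = 0"
    using assms(1,2) psum_even_Bsum(5)[of b] psum_even_Bsum(5)[of c]
    by (simp_all add: psum_def flip: fps_add_nth)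
  then have "M_iso b c \<longleftrightarrow>
      ?a (oidx j 1) * ?e (oidx j 2) * ?a (oidx j 3) * ?e (oidx j 4)
      = ?e (oidx j 1) * ?a (oidx j 2) * ?e (oidx j 3) * ?a (oidx j 4)"
    unfolding M_iso_iff_moebius[OF assms(1,2)]
    by (rule cyclic_cross_ratio_criterion) (use assms(3-7) in \<open>simp_all add: fps_X_dvd_iff\<close>)
  then show ?thesis
    by (simp add: fps_X_dvd_iff)
qed

end
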